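(* Let $A=kQ/I$ with reduced Gröbner–Shirshov basis $\mathcal G$, $W=\mathrm{Tip}(\mathcal G)$, Anick chains $W^{(i)}$, and two-sided Anick resolution $(P_*,d^{\mathcal M})$, all as described in the context. Suppose that for every $n\ge1$ and every $(n-1)$-chain $(w_1,\dots,w_n)\in W^{(n-1)}$, the path $w=w_1\cdots w_n$ does not converge to $u=u_1\cdots u_{n-1}$ for any $(u_1,\dots,u_{n-1})\in W^{(n-2)}$. Then the two-sided Anick resolution $(P_*,d^{\mathcal M})$ is minimal.
   Context: Quiver and order: - $k$ is a field and $Q$ a finite quiver. Paths are written left to right; vertices are paths of length $0$. - $\mathcal B$ is the set of all paths, $\mathcal B_+$ the set of paths of positive length, $Q_0$ the vertices and $Q_1$ the arrows. - Fix an admissible well-order $\prec$ on $\mathcal B$ (a well-order compatible with multiplication). $\mathrm{Tip}(r)$ is the $\prec$-largest path with nonzero coefficient in $r\ne0$. Ideal and Gröbner–Shirshov basis: - $I\subseteq kQ$ is a two-sided ideal contained in the span of paths of length $\ge2$, and $A=kQ/I$. - $\mathrm{Tip}(I)=\{\mathrm{Tip}(r):0\ne r\in I\}$ and $\mathrm{NonTip}(I)=\mathcal B\setminus\mathrm{Tip}(I)$, which is a basis of $A$. - $\mathcal G$ is the reduced Gröbner–Shirshov basis of $I$: $\mathcal G\subseteq I$; $W=\mathrm{Tip}(\mathcal G)$ generates $\langle\mathrm{Tip}(I)\rangle$; each element has tip coefficient $1$ and non-tip part in $\mathrm{span}\,\mathrm{NonTip}(I)$; no element of $W$ is a factor of another.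 Ufnarovskiĭ graph and chains: - The Ufnarovskiĭ graph $Q_W$ has vertices $Q_0\cup Q_1\cup\{$proper right factors of elements of $W\}$. - Its arrows are $e\to x$ ($e\in Q_0$, $x\in Q_1$, $x=ex$), together with $u\to v$ whenever $uv\in\mathcal B\cap\langle\mathrm{Tip}(I)\rangle$ and no proper left factor of $uv$ lies in $\langle\mathrm{Tip}(I)\rangle$. - An $i$-chain ($i\ge0$) is $(v_1,\dots,v_{i+1})\in\mathcal B_+^{i+1}$ such that $e\to v_1\to\cdots\to v_{i+1}$ is a path in $Q_W$ for some $e\in Q_0$. $W^{(i)}$ is the set of $i$-chains and $W^{(-1)}=Q_0$. Reduction and convergence: - For $w,w'\in\mathcal B$, $w$ reduces in one step to $w'$ if there are $u,v\in\mathcal B$ and $f\in I$ with $\mathrm{Tip}(f)\in W$, $w=u\,\mathrm{Tip}(f)\,v$, and $w'=upv$ for some path $p\ne\mathrm{Tip}(f)$ appearing with nonzero coefficient in $f$. - $w$ converges to $w'$ if there is a finite sequence of one or more reduction steps $w\Rightarrow u_1\Rightarrow\cdots\Rightarrow u_m\Rightarrow w'$ with $u_1,\dots,u_m\in\mathcal B$. Bar resolution and the quiver $\overline{Q_B}$: - $E=\bigoplus_{e\in Q_0}ke$, $A_+=\mathrm{span}(\mathrm{NonTip}(I)\setminus Q_0)$, $A^e=A\otimes_kA^{op}$. - The reduced bar resolution $B(A,A)_n=A\otimes_EA_+^{\otimes_En}\otimes_EA$ has differential $$d[a_1|\cdots|a_n]=a_1[a_2|\cdots|a_n]+\sum_{i=1}^{n-1}(-1)^i[\cdots|a_ia_{i+1}|\cdots]+(-1)^n[a_1|\cdots|a_{n-1}]a_n.$$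 It decomposes as $\bigoplus A^e\cdot[w_1|\cdots|w_n]$ over sequences of elements $w_i\in\mathrm{NonTip}(I)\setminus Q_0$ with $w_1\cdots w_n$ a path. - The weighted quiver $\overline{Q_B}$ has these sequences as vertices, with degree-$0$ vertices $Q_0$. - From $(w_1,\dots,w_n)$ there is an arrow $d_n^0$ to $(w_2,\dots,w_n)$ of weight $w_1\otimes1$. - For $1\le i\le n-1$ and each term $\lambda_ju_j$ of the normal form $w_iw_{i+1}\equiv\sum_j\lambda_ju_j \bmod I$ (distinct $u_j\in\mathrm{NonTip}(I)\setminus Q_0$, $\lambda_j\ne0$), there is an arrow $d_n^i$ to $(w_1,\dots,w_{i-1},u_j,w_{i+2},\dots,w_n)$ of weight $(-1)^i\lambda_j\otimes1$. - There is an arrow $d_n^n$ to $(w_1,\dots,w_{n-1})$ of weight $(-1)^n1\otimes w_n$. - Here $a\otimes b$ denotes the $A^e$-map sending the source generator to $a\cdot(\text{target generator})\cdot b$. The matching $\mathcal M$ and $\overline{Q_B}^{\mathcal M}$: - For $w\in\mathcal B$, $V_{w,i}$ is the set of vertices $(w_1,\dots,w_n)$ with $w_1\cdots w_n=w$ and $i\ge -1$ maximal such that $(w_1,\dots,w_{i+1})$ is an $i$-chain. - $\mathcal M$ is the set of arrows $(w_1,\dots,w_{i+1},w'_{i+2},w''_{i+2},w_{i+3},\dots,w_n)\to(w_1,\dots,w_n)$ with $(w_1,\dots,w_n)\in V_{w,i}$, $w'_{i+2}w''_{i+2}=w_{i+2}$ (both of positive length), and source in $V_{w,i+1}$. - $\overline{Q_B}^{\mathcal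 M}$ is obtained by replacing each arrow of $\mathcal M$ of weight $\phi$ by a reversed dotted arrow of weight $-\phi^{-1}$; the other arrows are called thick. A zigzag path alternates dotted and thick arrows. The two-sided Anick resolution: - $P_n=A\otimes_EkW^{(n-1)}\otimes_EA\cong\bigoplus_{(w_1,\dots,w_n)\in W^{(n-1)}}A^e\cdot[w_1|\cdots|w_n]$. - The component of $d^{\mathcal M}_n$ from the summand of an $(n-1)$-chain to that of an $(n-2)$-chain is the sum, over all zigzag paths in $\overline{Q_B}^{\mathcal M}$ between them, of the composites of the arrow weights. - It is a resolution of $A$ by projective $A$-bimodules, augmented by multiplication $P_0=A\otimes_EA\to A$. Minimality: a projective bimodule resolution $(P_*,d_* )$ of an $A$-bimodule is minimal if the induced maps $1\otimes d_*\otimes1:E\otimes_AP_*\otimes_AE\to E\otimes_AP_{*-1}\otimes_AE$ are all zero. *)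

theory Defs
  imports Main
begin

section \<open>Quivers and paths\<close>

record ('v,'a) quiver =
  verts :: "'v set"
  arrs  :: "'a set"
  src   :: "'a \<Rightarrow> 'v"
  tgt   :: "'a \<Rightarrow> 'v"

definition finite_quiver :: "('v,'a) quiver \<Rightarrow> bool" where
  "finite_quiver Q \<longleftrightarrow> finite (verts Q) \<and> finite (arrs Q) \<and>
     (\<forall>a\<in>arrs Q. src Q a \<in> verts Q \<and> tgt Q a \<in> verts Q)"

text \<open>A path is a start vertex together with a list of arrows, written left to right.
  Vertices are the paths with empty arrow list.\<close>
type_synonym ('v,'a) path = "'v \<times> 'a list"

fun composable :: "('v,'a) quiver \<Rightarrow> 'v \<Rightarrow> 'a list \<Rightarrow> bool" where
  "composable Q v [] = True"
| "composable Q v (a # as) = (a \<in> arrs Q \<and> src Q a = v \<and> composable Q (tgt Q a) as)"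

definition paths :: "('v,'a) quiver \<Rightarrow> ('v,'a) path set" where
  "paths Q = {(v, as). v \<in> verts Q \<and> composable Q v as}"

definition plen :: "('v,'a) path \<Rightarrow> nat" where
  "plen p = length (snd p)"

definition pend :: "('v,'a) quiver \<Rightarrow> ('v,'a) path \<Rightarrow> 'v" where
  "pend Q p = (if snd p = [] then fst p else tgt Q (last (snd p)))"

text \<open>Concatenation (only meaningful when the end of the first is the start of the second).\<close>
definition pmult :: "('v,'a) path \<Rightarrow> ('v,'a) path \<Rightarrow> ('v,'a) path" where
  "pmult p q = (fst p, snd p @ snd q)"

definition vpath :: "'v \<Rightarrow> ('v,'a) path" where
  "vpath e = (e, [])"

definition apath :: "('v,'a) quiver \<Rightarrow> 'a \<Rightarrow> ('v,'a) path" where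
  "apath Q a = (src Q a, [a])"

definition is_factor :: "('v,'a) quiver \<Rightarrow> ('v,'a) path \<Rightarrow> ('v,'a) path \<Rightarrow> bool" where
  "is_factor Q p w \<longleftrightarrow> p \<in> paths Q \<and> w \<in> paths Q \<and>
     (\<exists>u v. u \<in> paths Q \<and> v \<in> paths Q \<and> pend Q u = fst p \<and> pend Q p = fst v \<and>
            w = pmult (pmult u p) v)"

definition is_left_factor :: "('v,'a) quiver \<Rightarrow> ('v,'a) path \<Rightarrow> ('v,'a) path \<Rightarrow> bool" where
  "is_left_factor Q p w \<longleftrightarrow> p \<in> paths Q \<and> w \<in> paths Q \<and>
     (\<exists>v. v \<in> paths Q \<and> pend Q p = fst v \<and> w = pmult p v)"

definition is_right_factor :: "('v,'a) quiver \<Rightarrow> ('v,'a) path \<Rightarrow> ('v,'a) path \<Rightarrow> bool" where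
  "is_right_factor Q p w \<longleftrightarrow> p \<in> paths Q \<and> w \<in> paths Q \<and>
     (\<exists>u. u \<in> paths Q \<and> pend Q u = fst p \<and> w = pmult u p)"

section \<open>The path algebra kQ\<close>

definition supp :: "(('v,'a) path \<Rightarrow> 'k::zero) \<Rightarrow> ('v,'a) path set" where
  "supp f = {p. f p \<noteq> 0}"

definition kQ :: "('v,'a) quiver \<Rightarrow> (('v,'a) path \<Rightarrow> 'k::zero) set" where
  "kQ Q = {f. finite (supp f) \<and> supp f \<subseteq> paths Q}"

definition pelem :: "('v,'a) path \<Rightarrow> ('v,'a) path \<Rightarrow> 'k::{zero,one}" where
  "pelem p = (\<lambda>q. if q = p then 1 else 0)"

definition lpart :: "('v,'a) path \<Rightarrow> nat \<Rightarrow> ('v,'a) path" where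
  "lpart w i = (fst w, take i (snd w))"

definition rpart :: "('v,'a) quiver \<Rightarrow> ('v,'a) path \<Rightarrow> nat \<Rightarrow> ('v,'a) path" where
  "rpart Q w i = (pend Q (lpart w i), drop i (snd w))"

definition kmult :: "('v,'a) quiver \<Rightarrow> (('v,'a) path \<Rightarrow> 'k::comm_ring_1)
     \<Rightarrow> (('v,'a) path \<Rightarrow> 'k) \<Rightarrow> ('v,'a) path \<Rightarrow> 'k" where
  "kmult Q f g = (\<lambda>w. if w \<in> paths Q
      then (\<Sum>i\<in>{0..plen w}. f (lpart w i) * g (rpart Q w i)) else 0)"

definition two_sided_ideal :: "('v,'a) quiver \<Rightarrow> (('v,'a) path \<Rightarrow> 'k::field) set \<Rightarrow> bool" where
  "two_sided_ideal Q I \<longleftrightarrow> I \<subseteq> kQ Q \<and> (\<lambda>_. 0) \<in> I \<and>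
     (\<forall>f\<in>I. \<forall>g\<in>I. (\<lambda>p. f p + g p) \<in> I) \<and>
     (\<forall>c. \<forall>f\<in>I. (\<lambda>p. c * f p) \<in> I) \<and>
     (\<forall>f\<in>I. \<forall>h\<in>kQ Q. kmult Q h f \<in> I \<and> kmult Q f h \<in> I)"

definition ideal_in_len2 :: "(('v,'a) path \<Rightarrow> 'k::zero) set \<Rightarrow> bool" where
  "ideal_in_len2 I \<longleftrightarrow> (\<forall>f\<in>I. \<forall>p\<in>supp f. plen p \<ge> 2)"

section \<open>Admissible orders, tips, normal forms\<close>

definition admissible_order ::
  "('v,'a) quiver \<Rightarrow> (('v,'a) path \<Rightarrow> ('v,'a) path \<Rightarrow> bool) \<Rightarrow> bool" where
  "admissible_order Q lt \<longleftrightarrow>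
     (\<forall>p\<in>paths Q. \<not> lt p p) \<and>
     (\<forall>p\<in>paths Q. \<forall>q\<in>paths Q. \<forall>r\<in>paths Q. lt p q \<longrightarrow> lt q r \<longrightarrow> lt p r) \<and>
     (\<forall>p\<in>paths Q. \<forall>q\<in>paths Q. p \<noteq> q \<longrightarrow> lt p q \<or> lt q p) \<and>
     wf {(p, q). p \<in> paths Q \<and> q \<in> paths Q \<and> lt p q} \<and>
     (\<forall>p\<in>paths Q. \<forall>q\<in>paths Q. \<forall>r\<in>paths Q.
        lt p q \<longrightarrow> pend Q p = fst r \<longrightarrow> pend Q q = fst r \<longrightarrow> lt (pmult p r) (pmult q r)) \<and>
     (\<forall>p\<in>paths Q. \<forall>q\<in>paths Q. \<forall>r\<in>paths Q.
        lt p q \<longrightarrow> pend Q r = fst p \<longrightarrow> pend Q r = fst q \<longrightarrow> lt (pmult r p) (pmult r q)) \<and>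
     (\<forall>p w. is_factor Q p w \<longrightarrow> p = w \<or> lt p w)"

definition Tip :: "(('v,'a) path \<Rightarrow> ('v,'a) path \<Rightarrow> bool) \<Rightarrow> (('v,'a) path \<Rightarrow> 'k::zero)
     \<Rightarrow> ('v,'a) path" where
  "Tip lt r = (THE t. t \<in> supp r \<and> (\<forall>s\<in>supp r. s \<noteq> t \<longrightarrow> lt s t))"

definition TipI :: "(('v,'a) path \<Rightarrow> ('v,'a) path \<Rightarrow> bool) \<Rightarrow> (('v,'a) path \<Rightarrow> 'k::zero) set
     \<Rightarrow> ('v,'a) path set" where
  "TipI lt I = {Tip lt r | r. r \<in> I \<and> r \<noteq> (\<lambda>_. 0)}"

definition NonTip :: "('v,'a) quiver \<Rightarrow> (('v,'a) path \<Rightarrow> ('v,'a) path \<Rightarrow> bool)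
     \<Rightarrow> (('v,'a) path \<Rightarrow> 'k::zero) set \<Rightarrow> ('v,'a) path set" where
  "NonTip Q lt I = paths Q - TipI lt I"

text \<open>Paths lying in the ideal generated by Tip(I), i.e. having a factor in Tip(I).\<close>
definition in_tip_ideal :: "('v,'a) quiver \<Rightarrow> (('v,'a) path \<Rightarrow> ('v,'a) path \<Rightarrow> bool)
     \<Rightarrow> (('v,'a) path \<Rightarrow> 'k::zero) set \<Rightarrow> ('v,'a) path \<Rightarrow> bool" where
  "in_tip_ideal Q lt I w \<longleftrightarrow> (\<exists>t\<in>TipI lt I. is_factor Q t w)"

definition NF :: "('v,'a) quiver \<Rightarrow> (('v,'a) path \<Rightarrow> ('v,'a) path \<Rightarrow> bool)
     \<Rightarrow> (('v,'a) path \<Rightarrow> 'k::field) set \<Rightarrow> (('v,'a) path \<Rightarrow> 'k) \<Rightarrow> ('v,'a) path \<Rightarrow> 'k" where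
  "NF Q lt I x = (THE y. y \<in> kQ Q \<and> supp y \<subseteq> NonTip Q lt I \<and> (\<lambda>p. x p - y p) \<in> I)"

text \<open>Multiplication and unit in A = kQ/I (elements represented in normal form).\<close>
definition amult :: "('v,'a) quiver \<Rightarrow> (('v,'a) path \<Rightarrow> ('v,'a) path \<Rightarrow> bool)
     \<Rightarrow> (('v,'a) path \<Rightarrow> 'k::field) set \<Rightarrow> (('v,'a) path \<Rightarrow> 'k) \<Rightarrow> (('v,'a) path \<Rightarrow> 'k)
     \<Rightarrow> ('v,'a) path \<Rightarrow> 'k" where
  "amult Q lt I a b = NF Q lt I (kmult Q a b)"

definition aone :: "('v,'a) quiver \<Rightarrow> ('v,'a) path \<Rightarrow> 'k::{zero,one}" where
  "aone Q = (\<lambda>p. if p \<in> vpath ` verts Q then 1 else 0)"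

definition reduced_GSB :: "('v,'a) quiver \<Rightarrow> (('v,'a) path \<Rightarrow> ('v,'a) path \<Rightarrow> bool)
     \<Rightarrow> (('v,'a) path \<Rightarrow> 'k::field) set \<Rightarrow> (('v,'a) path \<Rightarrow> 'k) set \<Rightarrow> bool" where
  "reduced_GSB Q lt I G \<longleftrightarrow> G \<subseteq> I \<and>
     (\<forall>g\<in>G. g \<noteq> (\<lambda>_. 0) \<and> g (Tip lt g) = 1 \<and>
        (\<forall>p\<in>supp g. p \<noteq> Tip lt g \<longrightarrow> p \<in> NonTip Q lt I)) \<and>
     (\<forall>t\<in>TipI lt I. \<exists>w\<in>Tip lt ` G. is_factor Q w t) \<and>
     (\<forall>w\<in>Tip lt ` G. \<forall>w'\<in>Tip lt ` G. w \<noteq> w' \<longrightarrow> \<not> is_factor Q w w')"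

section \<open>Ufnarovskii graph and Anick chains\<close>

text \<open>Non-vertex vertices of the Ufnarovskii graph Q_W (W = Tip(G)).\<close>
definition uf_verts :: "('v,'a) quiver \<Rightarrow> ('v,'a) path set \<Rightarrow> ('v,'a) path set" where
  "uf_verts Q W = apath Q ` arrs Q \<union>
     {p. \<exists>w\<in>W. is_right_factor Q p w \<and> p \<noteq> w}"

definition uf_edge :: "('v,'a) quiver \<Rightarrow> (('v,'a) path \<Rightarrow> ('v,'a) path \<Rightarrow> bool)
     \<Rightarrow> (('v,'a) path \<Rightarrow> 'k::zero) set \<Rightarrow> ('v,'a) path set
     \<Rightarrow> ('v,'a) path \<Rightarrow> ('v,'a) path \<Rightarrow> bool" where
  "uf_edge Q lt I W u v \<longleftrightarrow> u \<in> uf_verts Q W \<and> v \<in> uf_verts Q W \<and>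
     pend Q u = fst v \<and> in_tip_ideal Q lt I (pmult u v) \<and>
     \<not> (\<exists>p. is_left_factor Q p (pmult u v) \<and> p \<noteq> pmult u v \<and> in_tip_ideal Q lt I p)"

text \<open>A list [v_1,...,v_{i+1}] is an i-chain: e \<rightarrow> v_1 \<rightarrow> ... \<rightarrow> v_{i+1} in Q_W.\<close>
definition is_chain :: "('v,'a) quiver \<Rightarrow> (('v,'a) path \<Rightarrow> ('v,'a) path \<Rightarrow> bool)
     \<Rightarrow> (('v,'a) path \<Rightarrow> 'k::zero) set \<Rightarrow> ('v,'a) path set \<Rightarrow> ('v,'a) path list \<Rightarrow> bool" where
  "is_chain Q lt I W vs \<longleftrightarrow> vs \<noteq> [] \<and>
     (\<forall>v\<in>set vs. v \<in> paths Q \<and> plen v > 0) \<and>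
     hd vs \<in> apath Q ` arrs Q \<and>
     (\<forall>j. Suc j < length vs \<longrightarrow> uf_edge Q lt I W (vs ! j) (vs ! Suc j))"

section \<open>The quiver of the reduced bar resolution\<close>

text \<open>A vertex of Q_B is (e, [w_1,...,w_n]); e is the start vertex (for n = 0 it is the
  degree-0 vertex e \<in> Q_0).\<close>
type_synonym ('v,'a) bvert = "'v \<times> ('v,'a) path list"

fun seq_comp :: "('v,'a) quiver \<Rightarrow> 'v \<Rightarrow> ('v,'a) path list \<Rightarrow> bool" where
  "seq_comp Q e [] = True"
| "seq_comp Q e (w # ws) = (fst w = e \<and> seq_comp Q (pend Q w) ws)"

definition seq_end :: "('v,'a) quiver \<Rightarrow> ('v,'a) bvert \<Rightarrow> 'v" where
  "seq_end Q c = (if snd c = [] then fst c else pend Q (last (snd c)))"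

definition seq_prod :: "('v,'a) bvert \<Rightarrow> ('v,'a) path" where
  "seq_prod c = (fst c, concat (map snd (snd c)))"

definition bverts :: "('v,'a) quiver \<Rightarrow> (('v,'a) path \<Rightarrow> ('v,'a) path \<Rightarrow> bool)
     \<Rightarrow> (('v,'a) path \<Rightarrow> 'k::zero) set \<Rightarrow> ('v,'a) bvert set" where
  "bverts Q lt I = {(e, ws). e \<in> verts Q \<and>
      (\<forall>w\<in>set ws. w \<in> NonTip Q lt I \<and> plen w > 0) \<and> seq_comp Q e ws}"

text \<open>Arrows of Q_B: (source, i, target) stands for an arrow d_n^i.\<close>
type_synonym ('v,'a) barrow = "('v,'a) bvert \<times> nat \<times> ('v,'a) bvert"

definition barrows :: "('v,'a) quiver \<Rightarrow> (('v,'a) path \<Rightarrow> ('v,'a) path \<Rightarrow> bool)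
     \<Rightarrow> (('v,'a) path \<Rightarrow> 'k::field) set \<Rightarrow> ('v,'a) barrow set" where
  "barrows Q lt I = {(s, i, t). s \<in> bverts Q lt I \<and> snd s \<noteq> [] \<and>
     ((i = 0 \<and> t = (pend Q (hd (snd s)), tl (snd s))) \<or>
      (1 \<le> i \<and> i < length (snd s) \<and>
        (\<exists>u. u \<in> supp (NF Q lt I (pelem (pmult (snd s ! (i - 1)) (snd s ! i)) :: _ \<Rightarrow> 'k))
             \<and> plen u > 0 \<and>
             t = (fst s, take (i - 1) (snd s) @ [u] @ drop (Suc i) (snd s)))) \<or>
      (i = length (snd s) \<and> t = (fst s, butlast (snd s))))}"

definition mid_scalar :: "('v,'a) quiver \<Rightarrow> (('v,'a) path \<Rightarrow> ('v,'a) path \<Rightarrow> bool)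
     \<Rightarrow> (('v,'a) path \<Rightarrow> 'k::field) set \<Rightarrow> ('v,'a) barrow \<Rightarrow> 'k" where
  "mid_scalar Q lt I x = (case x of (s, i, t) \<Rightarrow>
     (-1) ^ i * NF Q lt I (pelem (pmult (snd s ! (i - 1)) (snd s ! i))) (snd t ! (i - 1)))"

text \<open>Weights: a pair (a, b) stands for the A^e-map a \<otimes> b.\<close>
definition bweight :: "('v,'a) quiver \<Rightarrow> (('v,'a) path \<Rightarrow> ('v,'a) path \<Rightarrow> bool)
     \<Rightarrow> (('v,'a) path \<Rightarrow> 'k::field) set \<Rightarrow> ('v,'a) barrow
     \<Rightarrow> (('v,'a) path \<Rightarrow> 'k) \<times> (('v,'a) path \<Rightarrow> 'k)" where
  "bweight Q lt I x = (case x of (s, i, t) \<Rightarrow>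
     (if i = 0 then (pelem (hd (snd s)), aone Q)
      else if i = length (snd s) then ((\<lambda>p. (-1) ^ i * aone Q p), pelem (last (snd s)))
      else ((\<lambda>p. mid_scalar Q lt I x * aone Q p), aone Q)))"

section \<open>The matching and zigzag paths\<close>

text \<open>Length m of the longest prefix which is an (m-1)-chain (m = i+1 in the paper's V_{w,i}).\<close>
definition chainlen :: "('v,'a) quiver \<Rightarrow> (('v,'a) path \<Rightarrow> ('v,'a) path \<Rightarrow> bool)
     \<Rightarrow> (('v,'a) path \<Rightarrow> 'k::zero) set \<Rightarrow> ('v,'a) path set \<Rightarrow> ('v,'a) bvert \<Rightarrow> nat" where
  "chainlen Q lt I W c = Max {m. m \<le> length (snd c) \<and>
      (m = 0 \<or> is_chain Q lt I W (take m (snd c)))}"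

definition matching :: "('v,'a) quiver \<Rightarrow> (('v,'a) path \<Rightarrow> ('v,'a) path \<Rightarrow> bool)
     \<Rightarrow> (('v,'a) path \<Rightarrow> 'k::field) set \<Rightarrow> ('v,'a) path set \<Rightarrow> ('v,'a) barrow set" where
  "matching Q lt I W = {(s, i, t). (s, i, t) \<in> barrows Q lt I \<and>
     t \<in> bverts Q lt I \<and>
     (let m = chainlen Q lt I W t in
        i = Suc m \<and> m < length (snd t) \<and> chainlen Q lt I W s = Suc m \<and>
        (\<exists>w' w''. plen w' > 0 \<and> plen w'' > 0 \<and> pend Q w' = fst w'' \<and>
           pmult w' w'' = snd t ! m \<and>
           s = (fst t, take m (snd t) @ [w', w''] @ drop (Suc m) (snd t))))}"

text \<open>Edges of Q_B^M: (True, x) is the thick arrow x; (False, x) is the dotted arrow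
  reversing the matched arrow x.\<close>
type_synonym ('v,'a) medge = "bool \<times> ('v,'a) barrow"

definition medge_src :: "('v,'a) medge \<Rightarrow> ('v,'a) bvert" where
  "medge_src e = (case e of (True, (s, i, t)) \<Rightarrow> s | (False, (s, i, t)) \<Rightarrow> t)"

definition medge_tgt :: "('v,'a) medge \<Rightarrow> ('v,'a) bvert" where
  "medge_tgt e = (case e of (True, (s, i, t)) \<Rightarrow> t | (False, (s, i, t)) \<Rightarrow> s)"

text \<open>Weight of a dotted arrow: -\<phi>^{-1}, where \<phi> = \<lambda> (1 \<otimes> 1) is the (scalar) weight of the
  matched arrow.\<close>
definition medge_weight :: "('v,'a) quiver \<Rightarrow> (('v,'a) path \<Rightarrow> ('v,'a) path \<Rightarrow> bool)
     \<Rightarrow> (('v,'a) path \<Rightarrow> 'k::field) set \<Rightarrow> ('v,'a) medge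
     \<Rightarrow> (('v,'a) path \<Rightarrow> 'k) \<times> (('v,'a) path \<Rightarrow> 'k)" where
  "medge_weight Q lt I e = (if fst e then bweight Q lt I (snd e)
      else ((\<lambda>p. - inverse (mid_scalar Q lt I (snd e)) * aone Q p), aone Q))"

definition zigzag_paths :: "('v,'a) quiver \<Rightarrow> (('v,'a) path \<Rightarrow> ('v,'a) path \<Rightarrow> bool)
     \<Rightarrow> (('v,'a) path \<Rightarrow> 'k::field) set \<Rightarrow> ('v,'a) path set \<Rightarrow> ('v,'a) bvert \<Rightarrow> ('v,'a) bvert
     \<Rightarrow> ('v,'a) medge list set" where
  "zigzag_paths Q lt I W c c' = {es. odd (length es) \<and>
     (\<forall>j<length es. (even j \<longrightarrow> fst (es ! j) \<and> snd (es ! j) \<in> barrows Q lt I - matching Q lt I W) \<and>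
                    (odd j \<longrightarrow> \<not> fst (es ! j) \<and> snd (es ! j) \<in> matching Q lt I W)) \<and>
     medge_src (hd es) = c \<and> medge_tgt (last es) = c' \<and>
     (\<forall>j. Suc j < length es \<longrightarrow> medge_tgt (es ! j) = medge_src (es ! Suc j))}"

definition path_weight :: "('v,'a) quiver \<Rightarrow> (('v,'a) path \<Rightarrow> ('v,'a) path \<Rightarrow> bool)
     \<Rightarrow> (('v,'a) path \<Rightarrow> 'k::field) set \<Rightarrow> ('v,'a) medge list
     \<Rightarrow> (('v,'a) path \<Rightarrow> 'k) \<times> (('v,'a) path \<Rightarrow> 'k)" where
  "path_weight Q lt I es = foldr (\<lambda>e ab. case medge_weight Q lt I e of (x, y) \<Rightarrow>
      (amult Q lt I x (fst ab), amult Q lt I (snd ab) y)) es (aone Q, aone Q)"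

section \<open>The two-sided Anick resolution and minimality\<close>

text \<open>Generators of P_n: the (n-1)-chains, as vertices of Q_B; for n = 0 the vertices Q_0.\<close>
definition anick_gens :: "('v,'a) quiver \<Rightarrow> (('v,'a) path \<Rightarrow> ('v,'a) path \<Rightarrow> bool)
     \<Rightarrow> (('v,'a) path \<Rightarrow> 'k::zero) set \<Rightarrow> ('v,'a) path set \<Rightarrow> nat \<Rightarrow> ('v,'a) bvert set" where
  "anick_gens Q lt I W n = (if n = 0 then {(e, []) | e. e \<in> verts Q}
     else {(fst (hd ws), ws) | ws. is_chain Q lt I W ws \<and> length ws = n})"

text \<open>The induced map E \<otimes>_A P_n \<otimes>_A E \<rightarrow> E \<otimes>_A P_{n-1} \<otimes>_A E has, from generator c to
  generator c', the entry obtained from the component \<Sum> a \<otimes> b of d^M by taking the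
  coefficient of o(c') in a and of t(c') in b.\<close>
definition anick_minimal :: "('v,'a) quiver \<Rightarrow> (('v,'a) path \<Rightarrow> ('v,'a) path \<Rightarrow> bool)
     \<Rightarrow> (('v,'a) path \<Rightarrow> 'k::field) set \<Rightarrow> ('v,'a) path set \<Rightarrow> bool" where
  "anick_minimal Q lt I W \<longleftrightarrow>
     (\<forall>n\<ge>1. \<forall>c\<in>anick_gens Q lt I W n. \<forall>c'\<in>anick_gens Q lt I W (n - 1).
        (\<Sum>es\<in>zigzag_paths Q lt I W c c'.
            fst (path_weight Q lt I es) (vpath (fst c')) *
            snd (path_weight Q lt I es) (vpath (seq_end Q c'))) = 0)"

definition reduces1 :: "('v,'a) quiver \<Rightarrow> (('v,'a) path \<Rightarrow> ('v,'a) path \<Rightarrow> bool)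
     \<Rightarrow> (('v,'a) path \<Rightarrow> 'k::zero) set \<Rightarrow> ('v,'a) path set
     \<Rightarrow> ('v,'a) path \<Rightarrow> ('v,'a) path \<Rightarrow> bool" where
  "reduces1 Q lt I W w w' \<longleftrightarrow> w \<in> paths Q \<and> w' \<in> paths Q \<and>
     (\<exists>u v f p. u \<in> paths Q \<and> v \<in> paths Q \<and> f \<in> I \<and> f \<noteq> (\<lambda>_. 0) \<and> Tip lt f \<in> W \<and>
        pend Q u = fst (Tip lt f) \<and> pend Q (Tip lt f) = fst v \<and>
        w = pmult (pmult u (Tip lt f)) v \<and>
        p \<in> supp f \<and> p \<noteq> Tip lt f \<and> pend Q u = fst p \<and> pend Q p = fst v \<and>
        w' = pmult (pmult u p) v)"

definition converges :: "('v,'a) quiver \<Rightarrow> (('v,'a) path \<Rightarrow> ('v,'a) path \<Rightarrow> bool)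
     \<Rightarrow> (('v,'a) path \<Rightarrow> 'k::zero) set \<Rightarrow> ('v,'a) path set
     \<Rightarrow> ('v,'a) path \<Rightarrow> ('v,'a) path \<Rightarrow> bool" where
  "converges Q lt I W = tranclp (reduces1 Q lt I W)"

end

theory Submission
  imports Defs "HOL-Library.Sublist"
begin

(* An entry of the induced map E \<otimes>\<^sub>A P_n \<otimes>\<^sub>A E \<rightarrow> E \<otimes>\<^sub>A P_(n-1) \<otimes>\<^sub>A E is a sum,
   over zigzag paths, of vertex coefficients of products of arrow weights. Because I lies in the span
   of paths of length at least 2, the vertex coefficient of a product in A is the product of the
   vertex coefficients; so a zigzag path through an outer thick arrow d^0 or d^n, whose weight is
   w_1 \<otimes> 1 or 1 \<otimes> w_n with w_1, w_n of positive length, contributes nothing. Along every other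
   arrow the product w_1 ... w_n of the sequence either stays the same (a dotted arrow only splits a
   factor) or is replaced by a term of the normal form of w_i w_(i+1), which is reached from
   w_i w_(i+1) by reductions. A surviving zigzag path from an (n-1)-chain to an (n-2)-chain would
   therefore make the product of the first equal to, or converge to, the product of the second.
   Convergence is excluded by hypothesis, and equality is impossible because a chain is determined by
   its product: each Ufnarovskii edge ends at the first point where the path enters the tip ideal. *)

lemma successively_conv_nth:
  "successively P xs \<longleftrightarrow> (\<forall>j. Suc j < length xs \<longrightarrow> P (xs ! j) (xs ! Suc j))"
proof (induction P xs rule: successively.induct)
  case (3 P x y xs)
  have "(\<forall>j. Suc j < length (x # y # xs) \<longrightarrow> P ((x # y # xs) ! j) ((x # y # xs) ! Suc j)) \<longleftrightarrow>
    P x y \<and> (\<forall>j. Suc j < length (y # xs) \<longrightarrow> P ((y # xs) ! j) ((y # xs) ! Suc j))"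
    by (auto simp: less_Suc_eq_0_disj nth_Cons split: nat.split)
  with 3 show ?case by simp
qed auto

lemma rtranclp_along_successively:
  "\<lbrakk>successively (\<lambda>x y. stop x = start y) xs; xs \<noteq> []; \<forall>x\<in>set xs. R\<^sup>*\<^sup>* (start x) (stop x)\<rbrakk>
    \<Longrightarrow> R\<^sup>*\<^sup>* (start (hd xs)) (stop (last xs))"
proof (induction xs rule: induct_list012)
  case (3 x y zs)
  then have "R\<^sup>*\<^sup>* (start y) (stop (last (y # zs)))"
    by simp
  with 3 show ?case
    by (auto intro: rtranclp_trans)
qed auto

section \<open>Paths\<close>

lemma composable_append:
  "composable Q v (as @ bs) \<longleftrightarrow> composable Q v as \<and> composable Q (pend Q (v, as)) bs"
  by (induction as arbitrary: v) (auto simp: pend_def)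

lemma pend_append: "pend Q (v, as @ bs) = pend Q (pend Q (v, as), bs)"
  by (simp add: pend_def)

lemma composable_arrs: "composable Q v as \<Longrightarrow> set as \<subseteq> arrs Q"
  by (induction as arbitrary: v) auto

lemma pend_in_verts:
  assumes "finite_quiver Q" "p \<in> paths Q"
  shows "pend Q p \<in> verts Q"
  using assms composable_arrs[of Q "fst p" "snd p"]
  unfolding finite_quiver_def paths_def pend_def by (cases p) (auto dest!: last_in_set)

lemma paths_append:
  assumes "finite_quiver Q"
  shows "(v, as @ bs) \<in> paths Q \<longleftrightarrow> (v, as) \<in> paths Q \<and> (pend Q (v, as), bs) \<in> paths Q"
  using pend_in_verts[OF assms, of "(v, as)"] by (auto simp: paths_def composable_append)

lemma pmult_assoc: "pmult (pmult p q) r = pmult p (pmult q r)"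
  by (simp add: pmult_def)

lemma fst_pmult [simp]: "fst (pmult p q) = fst p"
  by (simp add: pmult_def)

lemma pend_pmult: "pend Q p = fst q \<Longrightarrow> pend Q (pmult p q) = pend Q q"
  by (cases p, cases q) (simp add: pmult_def pend_append)

lemma pmult_in_paths:
  assumes "finite_quiver Q" "pend Q p = fst q"
  shows "pmult p q \<in> paths Q \<longleftrightarrow> p \<in> paths Q \<and> q \<in> paths Q"
  using assms paths_append[OF assms(1), of "fst p" "snd p" "snd q"]
  by (cases q) (simp add: pmult_def)

lemma pmult_lpart_rpart: "pmult (lpart w i) (rpart Q w i) = w"
  by (simp add: pmult_def lpart_def rpart_def)

lemma fst_rpart: "fst (rpart Q w i) = pend Q (lpart w i)"
  by (simp add: rpart_def)

lemma lpart_pmult: "lpart (pmult p q) (plen p) = p"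
  by (simp add: lpart_def pmult_def plen_def)

lemma rpart_pmult: "pend Q p = fst q \<Longrightarrow> rpart Q (pmult p q) (plen p) = q"
  by (simp add: rpart_def lpart_pmult) (simp add: pmult_def plen_def)

lemma plen_pmult: "plen (pmult p q) = plen p + plen q"
  by (simp add: plen_def pmult_def)

lemma plen_lpart: "plen (lpart w i) = min i (plen w)"
  by (simp add: plen_def lpart_def)

lemma plen_rpart: "plen (rpart Q w i) = plen w - i"
  by (simp add: plen_def rpart_def)

section \<open>The path algebra\<close>

lemma
  assumes "admissible_order Q lt"
  shows admissible_irrefl: "p \<in> paths Q \<Longrightarrow> \<not> lt p p"
    and admissible_trans: "\<lbrakk>p \<in> paths Q; q \<in> paths Q; r \<in> paths Q; lt p q; lt q r\<rbrakk> \<Longrightarrow> lt p r"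
    and admissible_total: "\<lbrakk>p \<in> paths Q; q \<in> paths Q; p \<noteq> q\<rbrakk> \<Longrightarrow> lt p q \<or> lt q p"
    and admissible_wf: "wf {(p, q). p \<in> paths Q \<and> q \<in> paths Q \<and> lt p q}"
    and admissible_mult_right:
      "\<lbrakk>p \<in> paths Q; q \<in> paths Q; r \<in> paths Q; lt p q; pend Q p = fst r; pend Q q = fst r\<rbrakk>
       \<Longrightarrow> lt (pmult p r) (pmult q r)"
    and admissible_mult_left:
      "\<lbrakk>p \<in> paths Q; q \<in> paths Q; r \<in> paths Q; lt p q; pend Q r = fst p; pend Q r = fst q\<rbrakk>
       \<Longrightarrow> lt (pmult r p) (pmult r q)"
  using assms unfolding admissible_order_def by - (elim conjE; blast)+

lemma
  assumes "two_sided_ideal Q I"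
  shows ideal_kQ: "f \<in> I \<Longrightarrow> f \<in> kQ Q"
    and ideal_zero: "(\<lambda>_. 0) \<in> I"
    and ideal_add: "\<lbrakk>f \<in> I; g \<in> I\<rbrakk> \<Longrightarrow> (\<lambda>p. f p + g p) \<in> I"
    and ideal_smult: "f \<in> I \<Longrightarrow> (\<lambda>p. c * f p) \<in> I"
    and ideal_mult_left: "\<lbrakk>f \<in> I; h \<in> kQ Q\<rbrakk> \<Longrightarrow> kmult Q h f \<in> I"
    and ideal_mult_right: "\<lbrakk>f \<in> I; h \<in> kQ Q\<rbrakk> \<Longrightarrow> kmult Q f h \<in> I"
  using assms unfolding two_sided_ideal_def by - (elim conjE; fast)+

lemma ideal_diff:
  assumes "two_sided_ideal Q I" "f \<in> I" "g \<in> I"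
  shows "(\<lambda>p. f p - g p) \<in> I"
  using ideal_add[OF assms(1,2) ideal_smult[OF assms(1,3), of "-1"]] by simp

lemma kQI: "\<lbrakk>finite B; B \<subseteq> paths Q; supp f \<subseteq> B\<rbrakk> \<Longrightarrow> f \<in> kQ Q"
  unfolding kQ_def by (auto intro: finite_subset)

lemma kQ_add:
  fixes f g :: "('v, 'a) path \<Rightarrow> 'k::comm_ring_1"
  shows "\<lbrakk>f \<in> kQ Q; g \<in> kQ Q\<rbrakk> \<Longrightarrow> (\<lambda>p. f p + g p) \<in> kQ Q"
  by (rule kQI[of "supp f \<union> supp g"]) (auto simp: kQ_def supp_def)

lemma kQ_diff:
  fixes f g :: "('v, 'a) path \<Rightarrow> 'k::comm_ring_1"
  shows "\<lbrakk>f \<in> kQ Q; g \<in> kQ Q\<rbrakk> \<Longrightarrow> (\<lambda>p. f p - g p) \<in> kQ Q"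
  by (rule kQI[of "supp f \<union> supp g"]) (auto simp: kQ_def supp_def)

lemma kQ_smult:
  fixes f :: "('v, 'a) path \<Rightarrow> 'k::comm_ring_1"
  shows "f \<in> kQ Q \<Longrightarrow> (\<lambda>p. c * f p) \<in> kQ Q"
  by (rule kQI[of "supp f"]) (auto simp: kQ_def supp_def)

lemma supp_pelem [simp]: "supp (pelem p :: _ \<Rightarrow> 'k::zero_neq_one) = {p}"
  by (simp add: supp_def pelem_def)

lemma pelem_kQ: "p \<in> paths Q \<Longrightarrow> (pelem p :: _ \<Rightarrow> 'k::zero_neq_one) \<in> kQ Q"
  by (simp add: kQ_def)

lemma plen_vpath [simp]: "plen (vpath e) = 0"
  by (simp add: plen_def vpath_def)

lemma vpath_in_paths_iff: "vpath e \<in> paths Q \<longleftrightarrow> e \<in> verts Q"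
  by (simp add: vpath_def paths_def)

lemma aone_vpath: "aone Q (vpath e) = (if e \<in> verts Q then 1 else 0)"
  by (auto simp: aone_def vpath_def)

lemma aone_kQ: "finite_quiver Q \<Longrightarrow> aone Q \<in> kQ Q"
  by (rule kQI[of "vpath ` verts Q"])
     (auto simp: finite_quiver_def vpath_in_paths_iff supp_def aone_def)

lemma kmult_kQ:
  fixes f g :: "('v, 'a) path \<Rightarrow> 'k::comm_ring_1"
  assumes "f \<in> kQ Q" "g \<in> kQ Q"
  shows "kmult Q f g \<in> kQ Q"
proof (rule kQI)
  show "supp (kmult Q f g) \<subseteq> (\<lambda>(p, q). pmult p q) ` (supp f \<times> supp g) \<inter> paths Q"
  proof
    fix w assume "w \<in> supp (kmult Q f g)"
    then have "w \<in> paths Q" and "(\<Sum>i\<in>{0..plen w}. f (lpart w i) * g (rpart Q w i)) \<noteq> 0"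
      by (auto simp: supp_def kmult_def split: if_splits)
    then obtain i where "f (lpart w i) * g (rpart Q w i) \<noteq> 0"
      using sum.not_neutral_contains_not_neutral by blast
    then have "(lpart w i, rpart Q w i) \<in> supp f \<times> supp g"
      by (auto simp: supp_def)
    then show "w \<in> (\<lambda>(p, q). pmult p q) ` (supp f \<times> supp g) \<inter> paths Q"
      using \<open>w \<in> paths Q\<close> pmult_lpart_rpart[of w i Q] by (metis (no_types, lifting) IntI case_prod_conv image_eqI)
  qed
qed (use assms in \<open>auto simp: kQ_def\<close>)

lemma kmult_vpath:
  "kmult Q f g (vpath e) = (if e \<in> verts Q then f (vpath e) * g (vpath e) else 0)"
  by (simp add: kmult_def paths_def vpath_def plen_def lpart_def rpart_def pend_def)

lemma lpart_eq_imp_plen_le: "lpart w (plen u) = u \<Longrightarrow> plen u \<le> plen w"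
  using plen_lpart[of w "plen u"] by simp

lemma kmult_pelem_left:
  "kmult Q (pelem u) g w =
     (if w \<in> paths Q \<and> lpart w (plen u) = u then g (rpart Q w (plen u)) else 0)"
proof -
  have "(\<Sum>i\<in>{0..plen w}. pelem u (lpart w i) * g (rpart Q w i)) =
      (\<Sum>i\<in>{0..plen w}. if i = plen u then if lpart w i = u then g (rpart Q w i) else 0 else 0)"
    by (rule sum.cong) (auto simp: pelem_def plen_lpart)
  also have "\<dots> = (if lpart w (plen u) = u then g (rpart Q w (plen u)) else 0)"
    using lpart_eq_imp_plen_le[of w u] by (simp add: sum.delta)
  finally show ?thesis by (simp add: kmult_def)
qed

lemma kmult_pelem_right:
  "kmult Q f (pelem v) w =
     (if w \<in> paths Q \<and> rpart Q w (plen w - plen v) = v then f (lpart w (plen w - plen v)) else 0)"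
proof -
  have "(\<Sum>i\<in>{0..plen w}. f (lpart w i) * pelem v (rpart Q w i)) =
      (\<Sum>i\<in>{0..plen w}. if i = plen w - plen v then if rpart Q w i = v then f (lpart w i) else 0 else 0)"
    by (rule sum.cong) (auto simp: pelem_def plen_rpart)
  also have "\<dots> = (if rpart Q w (plen w - plen v) = v then f (lpart w (plen w - plen v)) else 0)"
    by (simp add: sum.delta)
  finally show ?thesis by (simp add: kmult_def)
qed

lemma kmult_sandwich_pmult:
  assumes "finite_quiver Q" "pmult (pmult u q) v \<in> paths Q" "pend Q u = fst q" "pend Q q = fst v"
  shows "kmult Q (kmult Q (pelem u) g) (pelem v) (pmult (pmult u q) v) = g q"
proof -
  have "plen (pmult (pmult u q) v) - plen v = plen (pmult u q)"
    by (simp add: plen_pmult)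
  moreover have "rpart Q (pmult (pmult u q) v) (plen (pmult u q)) = v"
    using assms(3,4) by (simp add: rpart_pmult pend_pmult)
  moreover have "pmult u q \<in> paths Q"
    using assms pmult_in_paths[OF assms(1), of "pmult u q" v] by (simp add: pend_pmult)
  ultimately show ?thesis
    using assms by (simp add: kmult_pelem_left kmult_pelem_right lpart_pmult rpart_pmult pmult_in_paths)
qed

lemma supp_kmult_sandwich:
  assumes "t \<in> supp (kmult Q (kmult Q (pelem u) g) (pelem v))"
  obtains q where "q \<in> supp g" "pend Q u = fst q" "pend Q q = fst v" "t = pmult (pmult u q) v"
proof
  define s where "s = lpart t (plen t - plen v)"
  define q where "q = rpart Q s (plen u)"
  have v: "rpart Q t (plen t - plen v) = v" and u: "lpart s (plen u) = u" and "g q \<noteq> 0"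
    using assms by (auto simp: supp_def kmult_pelem_left kmult_pelem_right s_def q_def split: if_splits)
  then show "q \<in> supp g" by (simp add: supp_def)
  show uq: "pend Q u = fst q"
    using u by (simp add: q_def fst_rpart)
  have s: "s = pmult u q"
    using pmult_lpart_rpart[of s "plen u" Q] u by (simp add: q_def)
  show "t = pmult (pmult u q) v"
    using pmult_lpart_rpart[of t "plen t - plen v" Q] v by (simp add: s_def[symmetric] s)
  show "pend Q q = fst v"
    using pend_pmult[OF uq] fst_rpart[of Q t "plen t - plen v"] by (simp add: v s_def[symmetric] s)
qed

lemma admissible_finite_has_greatest:
  assumes "admissible_order Q lt" "finite S" "S \<noteq> {}" "S \<subseteq> paths Q"
  shows "\<exists>t\<in>S. \<forall>s\<in>S. s \<noteq> t \<longrightarrow> lt s t"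
  using assms(2-4)
proof (induction S rule: finite_ne_induct)
  case (insert x F)
  then obtain t where t: "t \<in> F" "\<forall>s\<in>F. s \<noteq> t \<longrightarrow> lt s t" by auto
  show ?case
  proof (cases "lt x t")
    case False
    then have "lt t x"
      using admissible_total[OF assms(1), of x t] insert t by auto
    have "lt s x" if "s \<in> F" for s
      using that t \<open>lt t x\<close> insert.prems admissible_trans[OF assms(1), of s t x]
      by (cases "s = t") auto
    then show ?thesis by auto
  qed (use t in auto)
qed simp

lemma
  assumes "admissible_order Q lt" "r \<in> kQ Q" "r \<noteq> (\<lambda>_. 0)"
  shows Tip_in_supp: "Tip lt r \<in> supp r"
    and lt_Tip: "\<lbrakk>s \<in> supp r; s \<noteq> Tip lt r\<rbrakk> \<Longrightarrow> lt s (Tip lt r)"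
proof -
  have "supp r \<noteq> {}"
    using assms(3) by (auto simp: supp_def)
  moreover have "finite (supp r)" "supp r \<subseteq> paths Q"
    using assms(2) by (auto simp: kQ_def)
  ultimately obtain t where t: "t \<in> supp r" "\<forall>s\<in>supp r. s \<noteq> t \<longrightarrow> lt s t"
    using admissible_finite_has_greatest[OF assms(1)] by meson
  have "Tip lt r = t"
    unfolding Tip_def
  proof (rule the_equality)
    fix t' assume t': "t' \<in> supp r \<and> (\<forall>s\<in>supp r. s \<noteq> t' \<longrightarrow> lt s t')"
    show "t' = t"
    proof (rule ccontr)
      assume "t' \<noteq> t"
      then have "lt t t" "t \<in> paths Q"
        using t t' assms(2) admissible_trans[OF assms(1), of t t' t] by (auto simp: kQ_def)
      then show False using admissible_irrefl[OF assms(1)] by blast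
    qed
  qed (use t in simp)
  with t show "Tip lt r \<in> supp r" and "\<lbrakk>s \<in> supp r; s \<noteq> Tip lt r\<rbrakk> \<Longrightarrow> lt s (Tip lt r)"
    by auto
qed

section \<open>Normal forms and reductions\<close>

definition is_normal_form ::
  "('v, 'a) quiver \<Rightarrow> (('v, 'a) path \<Rightarrow> ('v, 'a) path \<Rightarrow> bool) \<Rightarrow> (('v, 'a) path \<Rightarrow> 'k::field) set
   \<Rightarrow> (('v, 'a) path \<Rightarrow> 'k) \<Rightarrow> (('v, 'a) path \<Rightarrow> 'k) \<Rightarrow> bool" where
  "is_normal_form Q lt I x y \<longleftrightarrow> y \<in> kQ Q \<and> supp y \<subseteq> NonTip Q lt I \<and> (\<lambda>p. x p - y p) \<in> I"

lemma normal_form_unique: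
  assumes adm: "admissible_order Q lt" and ideal: "two_sided_ideal Q I"
    and "is_normal_form Q lt I x y" "is_normal_form Q lt I x y'"
  shows "y = y'"
proof (rule ccontr)
  define d where "d = (\<lambda>p. y p - y' p)"
  assume "y \<noteq> y'"
  then have "d \<noteq> (\<lambda>_. 0)"
    by (auto simp: d_def fun_eq_iff)
  moreover have "d \<in> I"
    using ideal_diff[OF ideal, of "\<lambda>p. x p - y' p" "\<lambda>p. x p - y p"] assms(3,4)
    by (simp add: is_normal_form_def d_def)
  ultimately have "Tip lt d \<in> TipI lt I" and "Tip lt d \<in> supp d"
    using Tip_in_supp[OF adm ideal_kQ[OF ideal]] by (auto simp: TipI_def)
  moreover have "supp d \<subseteq> supp y \<union> supp y'"
    by (auto simp: d_def supp_def)
  then have "supp d \<subseteq> NonTip Q lt I"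
    using assms(3,4) by (auto simp: is_normal_form_def)
  ultimately show False
    by (auto simp: NonTip_def)
qed

lemma NF_eqI:
  "\<lbrakk>admissible_order Q lt; two_sided_ideal Q I; is_normal_form Q lt I x y\<rbrakk> \<Longrightarrow> NF Q lt I x = y"
  unfolding NF_def
  by (rule the_equality) (auto simp: is_normal_form_def[symmetric] dest: normal_form_unique)

lemma normal_form_from_paths:
  assumes ideal: "two_sided_ideal Q I" and "finite F" "z \<in> kQ Q" "supp z \<subseteq> F"
    and "\<forall>t\<in>F. \<exists>y. is_normal_form Q lt I (pelem t) y \<and> supp y \<subseteq> S"
  shows "\<exists>y. is_normal_form Q lt I z y \<and> supp y \<subseteq> S"
  using assms(2-)
proof (induction F arbitrary: z)
  case empty
  then have "z = (\<lambda>_. 0)"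
    by (auto simp: supp_def)
  then have "is_normal_form Q lt I z (\<lambda>_. 0)"
    using ideal_zero[OF ideal] by (auto simp: is_normal_form_def kQ_def supp_def)
  then show ?case by (auto simp: supp_def)
next
  case (insert a F)
  have "supp (z(a := 0)) \<subseteq> supp z" and "supp (z(a := 0)) \<subseteq> F"
    using insert.prems(2) by (auto simp: supp_def)
  then have "z(a := 0) \<in> kQ Q"
    using insert.prems(1) by (auto simp: kQ_def intro: finite_subset)
  with \<open>supp (z(a := 0)) \<subseteq> F\<close> obtain y' where
    y': "is_normal_form Q lt I (z(a := 0)) y'" "supp y' \<subseteq> S"
    using insert.IH insert.prems(3) by blast
  obtain ya where ya: "is_normal_form Q lt I (pelem a) ya" "supp ya \<subseteq> S"
    using insert.prems(3) by blast
  define y where "y = (\<lambda>p. y' p + z a * ya p)"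
  have "(\<lambda>p. z p - y p) = (\<lambda>p. ((z(a := 0)) p - y' p) + z a * (pelem a p - ya p))"
    by (auto simp: y_def pelem_def fun_eq_iff algebra_simps)
  then have "(\<lambda>p. z p - y p) \<in> I"
    using y'(1) ya(1) by (auto simp: is_normal_form_def intro!: ideal_add[OF ideal] ideal_smult[OF ideal])
  moreover have "supp y \<subseteq> supp y' \<union> supp ya"
    by (auto simp: y_def supp_def)
  moreover have "y \<in> kQ Q"
    using y'(1) ya(1) by (auto simp: y_def is_normal_form_def intro!: kQ_add kQ_smult)
  ultimately have "is_normal_form Q lt I z y" and "supp y \<subseteq> S"
    using y'(1,2) ya(1,2) by (auto simp: is_normal_form_def)
  then show ?case by blast
qed

lemma reduces1I:
  assumes "w \<in> paths Q" "w' \<in> paths Q" "u \<in> paths Q" "v \<in> paths Q"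
    "f \<in> I" "f \<noteq> (\<lambda>_. 0)" "Tip lt f \<in> W" "p \<in> supp f" "p \<noteq> Tip lt f"
    "pend Q u = fst (Tip lt f)" "pend Q (Tip lt f) = fst v" "pend Q u = fst p" "pend Q p = fst v"
    "w = pmult (pmult u (Tip lt f)) v" "w' = pmult (pmult u p) v"
  shows "reduces1 Q lt I W w w'"
  unfolding reduces1_def using assms by blast

lemma reduces1_ends:
  assumes "reduces1 Q lt I W x y"
  shows "x \<in> paths Q" "y \<in> paths Q" "fst y = fst x" "pend Q y = pend Q x"
  using assms by (auto simp: reduces1_def pend_pmult)

lemma converges_ends:
  assumes "converges Q lt I W x y"
  shows "x \<in> paths Q" "y \<in> paths Q" "fst y = fst x" "pend Q y = pend Q x"
  using assms unfolding converges_def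
  by (induction rule: tranclp_induct) (auto dest: reduces1_ends)

lemma reduces1_pmult:
  assumes fq: "finite_quiver Q" and red: "reduces1 Q lt I W x y"
    and a: "a \<in> paths Q" "pend Q a = fst x" and b: "b \<in> paths Q" "pend Q x = fst b"
  shows "reduces1 Q lt I W (pmult (pmult a x) b) (pmult (pmult a y) b)"
proof -
  obtain u v f p where uv: "u \<in> paths Q" "v \<in> paths Q" and f: "f \<in> I" "f \<noteq> (\<lambda>_. 0)" "Tip lt f \<in> W"
    and ends: "pend Q u = fst (Tip lt f)" "pend Q (Tip lt f) = fst v" "pend Q u = fst p" "pend Q p = fst v"
    and p: "p \<in> supp f" "p \<noteq> Tip lt f"
    and x: "x = pmult (pmult u (Tip lt f)) v" and y: "y = pmult (pmult u p) v"
    using red by (auto simp: reduces1_def)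
  have "pend Q x = pend Q v" "fst x = fst u"
    using ends by (simp_all add: x pend_pmult)
  moreover have "pend Q y = pend Q x" "fst y = fst x" "x \<in> paths Q" "y \<in> paths Q"
    using reduces1_ends[OF red] by simp_all
  ultimately show ?thesis
    using uv f ends p a b
    by (intro reduces1I[where u="pmult a u" and v="pmult v b" and f=f and p=p])
      (simp_all add: pmult_in_paths[OF fq] pend_pmult pmult_assoc x y)
qed

lemma converges_pmult:
  assumes fq: "finite_quiver Q" and conv: "converges Q lt I W x y"
    and a: "a \<in> paths Q" "pend Q a = fst x" and b: "b \<in> paths Q" "pend Q x = fst b"
  shows "converges Q lt I W (pmult (pmult a x) b) (pmult (pmult a y) b)"
  using conv unfolding converges_def
proof (induction rule: tranclp_induct)
  case (base y)
  then show ?case using reduces1_pmult[OF fq _ a b] by blast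
next
  case (step y z)
  then have "fst y = fst x" "pend Q y = pend Q x"
    using converges_ends[of Q lt I W x y] by (simp_all add: converges_def)
  then have "reduces1 Q lt I W (pmult (pmult a y) b) (pmult (pmult a z) b)"
    using reduces1_pmult[OF fq step.hyps(2)] a b by simp
  with step.IH show ?case by simp
qed

section \<open>Anick chains and the bar quiver\<close>

lemma seq_comp_append:
  "seq_comp Q e (xs @ ys) \<longleftrightarrow> seq_comp Q e xs \<and> seq_comp Q (pend Q (seq_prod (e, xs))) ys"
proof (induction xs arbitrary: e)
  case (Cons x xs)
  show ?case
  proof (cases "fst x = e")
    case True
    then have "pend Q (seq_prod (e, x # xs)) = pend Q (seq_prod (pend Q x, xs))"
      by (cases x) (simp add: seq_prod_def pend_append)
    then show ?thesis
      using Cons.IH[of "pend Q x"] True by simp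
  qed simp
qed (simp add: seq_prod_def pend_def)

lemma seq_prod_in_paths:
  assumes "finite_quiver Q" "(e, ws) \<in> bverts Q lt I"
  shows "seq_prod (e, ws) \<in> paths Q"
proof -
  have "e \<in> verts Q \<Longrightarrow> \<forall>w\<in>set ws. w \<in> paths Q \<Longrightarrow> seq_comp Q e ws \<Longrightarrow> seq_prod (e, ws) \<in> paths Q"
  proof (induction ws arbitrary: e)
    case (Cons w ws)
    then have "(fst w, snd w) \<in> paths Q" "seq_prod (pend Q w, ws) \<in> paths Q"
      using pend_in_verts[OF assms(1)] by auto
    with Cons.prems show ?case
      by (auto simp: seq_prod_def paths_append[OF assms(1)])
  qed (simp add: seq_prod_def paths_def)
  then show ?thesis
    using assms(2) by (auto simp: bverts_def NonTip_def)
qed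

lemma matching_seq_prod:
  assumes "(s, i, t) \<in> matching Q lt I W"
  shows "seq_prod s = seq_prod t"
proof -
  obtain m w' w'' where m: "m < length (snd t)" and "pmult w' w'' = snd t ! m"
    and s: "s = (fst t, take m (snd t) @ [w', w''] @ drop (Suc m) (snd t))"
    using assms unfolding matching_def Let_def by blast
  then have "snd (snd t ! m) = snd w' @ snd w''"
    by (metis pmult_def snd_conv)
  moreover have "snd t = take m (snd t) @ snd t ! m # drop (Suc m) (snd t)"
    using m by (simp add: id_take_nth_drop)
  then have "concat (map snd (snd t)) =
      concat (map snd (take m (snd t))) @ snd (snd t ! m) @ concat (map snd (drop (Suc m) (snd t)))"
    by (metis concat.simps(2) concat_append list.simps(9) map_append)
  ultimately show ?thesis
    by (simp add: s seq_prod_def)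
qed

lemma uf_edge_prefix_eq:
  assumes fq: "finite_quiver Q" and a: "uf_edge Q lt I W x a" and b: "uf_edge Q lt I W x b"
    and "prefix (snd a) (snd b)"
  shows "a = b"
proof (rule ccontr)
  assume "a \<noteq> b"
  moreover have "fst a = fst b"
    using a b by (simp add: uf_edge_def)
  ultimately obtain r where r: "snd b = snd a @ r" "r \<noteq> []"
    using \<open>prefix (snd a) (snd b)\<close> by (metis append.right_neutral prefix_def prod_eq_iff)
  have "pmult x b \<in> paths Q"
    using b by (auto simp: uf_edge_def in_tip_ideal_def is_factor_def)
  then have "pmult x a \<in> paths Q" "(pend Q (pmult x a), r) \<in> paths Q"
    using paths_append[OF fq, of "fst x" "snd x @ snd a" r] r(1) by (simp_all add: pmult_def)
  moreover have "pmult (pmult x a) (pend Q (pmult x a), r) = pmult x b"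
    using r(1) by (simp add: pmult_def)
  ultimately have "is_left_factor Q (pmult x a) (pmult x b)"
    using \<open>pmult x b \<in> paths Q\<close> unfolding is_left_factor_def by force
  moreover have "pmult x a \<noteq> pmult x b"
    using r by (simp add: pmult_def)
  ultimately show False
    using a b unfolding uf_edge_def by blast
qed

lemma successively_uf_edge_unique:
  assumes fq: "finite_quiver Q"
  shows "\<lbrakk>successively (uf_edge Q lt I W) (x # xs); successively (uf_edge Q lt I W) (x # ys);
      \<forall>v\<in>set xs \<union> set ys. 0 < plen v; concat (map snd xs) = concat (map snd ys)\<rbrakk> \<Longrightarrow> xs = ys"
proof (induction xs arbitrary: x ys)
  case Nil
  then show ?case by (cases ys) (auto simp: plen_def)
next
  case (Cons a xs)
  then obtain b ys' where ys: "ys = b # ys'"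
    by (cases ys) (auto simp: plen_def)
  have edges: "uf_edge Q lt I W x a" "uf_edge Q lt I W x b"
    using Cons.prems(1,2) ys by auto
  have "prefix (snd a) (snd a @ concat (map snd xs))"
    by simp
  moreover have "prefix (snd b) (snd a @ concat (map snd xs))"
    using Cons.prems(4) ys by simp
  ultimately have "a = b"
    using prefix_same_cases uf_edge_prefix_eq[OF fq edges] uf_edge_prefix_eq[OF fq edges(2,1)] by metis
  then show ?case
    using Cons.IH[of a ys'] Cons.prems ys by (simp add: successively_Cons)
qed

lemma is_chain_hd:
  assumes "is_chain Q lt I W vs"
  obtains a xs where "vs = apath Q a # xs"
  using assms unfolding is_chain_def by (cases vs) auto

lemma is_chain_unique:
  assumes fq: "finite_quiver Q" and chains: "is_chain Q lt I W vs" "is_chain Q lt I W vs'"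
    and concat_eq: "concat (map snd vs) = concat (map snd vs')"
  shows "vs = vs'"
proof -
  obtain a xs a' ys where vs: "vs = apath Q a # xs" and vs': "vs' = apath Q a' # ys"
    using is_chain_hd chains by metis
  have "successively (uf_edge Q lt I W) vs" "successively (uf_edge Q lt I W) vs'"
    using chains by (simp_all add: is_chain_def successively_conv_nth)
  moreover have "\<forall>v\<in>set xs \<union> set ys. 0 < plen v"
    using chains vs vs' by (auto simp: is_chain_def)
  moreover have "a = a'" "concat (map snd xs) = concat (map snd ys)"
    using concat_eq by (simp_all add: vs vs' apath_def)
  ultimately show ?thesis
    using successively_uf_edge_unique[OF fq, of lt I W "apath Q a" xs ys] by (simp add: vs vs')
qed

lemma anick_gens_seq_prod_neq:
  assumes fq: "finite_quiver Q" and "1 \<le> n"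
    and c: "c \<in> anick_gens Q lt I W n" and c': "c' \<in> anick_gens Q lt I W (n - 1)"
  shows "seq_prod c \<noteq> seq_prod c'"
proof
  assume eq: "seq_prod c = seq_prod c'"
  obtain ws where c_def: "c = (fst (hd ws), ws)" and ws: "is_chain Q lt I W ws" "length ws = n"
    using c \<open>1 \<le> n\<close> unfolding anick_gens_def by auto
  show False
  proof (cases "n = 1")
    case True
    then obtain e where "c' = (e, [])"
      using c' unfolding anick_gens_def by auto
    moreover obtain a ws' where "ws = apath Q a # ws'"
      using is_chain_hd ws(1) by metis
    ultimately show False
      using eq c_def by (simp add: seq_prod_def apath_def)
  next
    case False
    then obtain ws' where "c' = (fst (hd ws'), ws')" "is_chain Q lt I W ws'" "length ws' = n - 1"
      using c' \<open>1 \<le> n\<close> unfolding anick_gens_def by auto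
    then show False
      using is_chain_unique[OF fq ws(1)] eq c_def ws(2) \<open>1 \<le> n\<close> by (auto simp: seq_prod_def)
  qed
qed

(* The thick arrows d_n^0 and d_n^n; their weights w_1 \<otimes> 1 and 1 \<otimes> w_n vanish at every vertex. *)
definition outer_arrow :: "('v, 'a) barrow \<Rightarrow> bool" where
  "outer_arrow x \<longleftrightarrow> (case x of (s, i, t) \<Rightarrow> i = 0 \<or> i = length (snd s))"

lemma zigzag_edge_kinds:
  assumes "es \<in> zigzag_paths Q lt I W c c'" "x \<in> set es"
  shows "fst x \<Longrightarrow> snd x \<in> barrows Q lt I - matching Q lt I W"
    and "\<not> fst x \<Longrightarrow> snd x \<in> matching Q lt I W"
proof -
  obtain j where "j < length es" "x = es ! j"
    using assms(2) by (auto simp: in_set_conv_nth)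
  then show "fst x \<Longrightarrow> snd x \<in> barrows Q lt I - matching Q lt I W"
    and "\<not> fst x \<Longrightarrow> snd x \<in> matching Q lt I W"
    using assms(1) unfolding zigzag_paths_def by (cases "even j"; force)+
qed

lemma middle_arrow_decomp:
  assumes "(s, i, t) \<in> barrows Q lt I" "\<not> outer_arrow (s, i, t)"
  obtains e L1 a b L2 u where "s = (e, L1 @ [a, b] @ L2)" "t = (e, L1 @ [u] @ L2)"
    "u \<in> supp (NF Q lt I (pelem (pmult a b)))"
proof -
  obtain e ws where s: "s = (e, ws)"
    by (cases s)
  obtain u where i: "1 \<le> i" "i < length ws"
    and "u \<in> supp (NF Q lt I (pelem (pmult (ws ! (i - 1)) (ws ! i))))"
    and "t = (e, take (i - 1) ws @ [u] @ drop (Suc i) ws)"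
    using assms by (auto simp: barrows_def outer_arrow_def s)
  moreover have "ws = take (i - 1) ws @ [ws ! (i - 1), ws ! i] @ drop (Suc i) ws"
    using i by (metis Cons_nth_drop_Suc Suc_pred' append_Cons append_Nil append_take_drop_id
        less_imp_diff_less less_le_trans zero_less_one)
  ultimately show ?thesis
    using that s by metis
qed

lemma medge_weight_kQ:
  assumes "finite_quiver Q" "fst x \<longrightarrow> snd x \<in> barrows Q lt I"
  shows "fst (medge_weight Q lt I x) \<in> kQ Q \<and> snd (medge_weight Q lt I x) \<in> kQ Q"
proof -
  obtain thick s i t where x: "x = (thick, s, i, t)"
    by (metis prod.collapse)
  show ?thesis
  proof (cases thick)
    case True
    then have "s \<in> bverts Q lt I" "snd s \<noteq> []"
      using assms(2) x by (auto simp: barrows_def)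
    then have "hd (snd s) \<in> paths Q" "last (snd s) \<in> paths Q"
      by (auto simp: bverts_def NonTip_def)
    then show ?thesis
      using True x by (simp add: medge_weight_def bweight_def pelem_kQ kQ_smult aone_kQ[OF assms(1)])
  qed (use kQ_smult[OF aone_kQ[OF assms(1)], of "- inverse (mid_scalar Q lt I (s, i, t))"]
      aone_kQ[OF assms(1)] in \<open>simp add: x medge_weight_def\<close>)
qed

section \<open>Consequences of a reduced Groebner-Shirshov basis\<close>

locale reduced_gsb =
  fixes Q :: "('v, 'a) quiver" and lt :: "('v, 'a) path \<Rightarrow> ('v, 'a) path \<Rightarrow> bool"
    and I :: "(('v, 'a) path \<Rightarrow> 'k::field) set" and G :: "(('v, 'a) path \<Rightarrow> 'k) set"
  assumes finite_Q: "finite_quiver Q" and admissible: "admissible_order Q lt"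
    and ideal: "two_sided_ideal Q I" and reduced: "reduced_GSB Q lt I G"
begin

abbreviation W :: "('v, 'a) path set" where
  "W \<equiv> Tip lt ` G"

lemma
  assumes "g \<in> G"
  shows GSB_in_ideal: "g \<in> I" and GSB_nonzero: "g \<noteq> (\<lambda>_. 0)" and GSB_Tip_coeff: "g (Tip lt g) = 1"
  using assms reduced by (auto simp: reduced_GSB_def)

lemma TipI_has_GSB_factor: "t \<in> TipI lt I \<Longrightarrow> \<exists>w\<in>W. is_factor Q w t"
  using reduced by (simp add: reduced_GSB_def)

lemma
  assumes g: "g \<in> G" and u: "u \<in> paths Q" "pend Q u = fst (Tip lt g)"
    and v: "v \<in> paths Q" "pend Q (Tip lt g) = fst v"
    and p: "p = pmult (pmult u (Tip lt g)) v" "p \<in> paths Q"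
  defines "r \<equiv> kmult Q (kmult Q (pelem u) g) (pelem v)"
  shows tip_multiple_in_ideal: "r \<in> I"
    and tip_multiple_reduces: "t \<in> supp (\<lambda>x. pelem p x - r x) \<Longrightarrow> reduces1 Q lt I W p t \<and> lt t p"
proof -
  have gk: "g \<in> kQ Q"
    using ideal_kQ[OF ideal GSB_in_ideal[OF g]] .
  show "r \<in> I"
    unfolding r_def using ideal_mult_left ideal_mult_right ideal pelem_kQ GSB_in_ideal g u v by metis
  have "r p = 1"
    using kmult_sandwich_pmult[OF finite_Q p(2)[unfolded p(1)] u(2) v(2), of g] GSB_Tip_coeff[OF g]
    by (simp add: r_def p(1))
  moreover assume "t \<in> supp (\<lambda>x. pelem p x - r x)"
  ultimately have t: "t \<in> supp r" "t \<noteq> p"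
    by (auto simp: supp_def pelem_def split: if_splits)
  then obtain q where q: "q \<in> supp g" "pend Q u = fst q" "pend Q q = fst v" "t = pmult (pmult u q) v"
    using supp_kmult_sandwich unfolding r_def by metis
  have "t \<in> paths Q"
    using t(1) kmult_kQ[OF kmult_kQ[OF pelem_kQ[OF u(1)] gk] pelem_kQ[OF v(1)]] by (auto simp: r_def kQ_def)
  have "q \<noteq> Tip lt g"
    using q(4) t(2) p(1) by auto
  then have "lt q (Tip lt g)"
    using lt_Tip[OF admissible gk GSB_nonzero[OF g] q(1)] by simp
  moreover have "q \<in> paths Q" "Tip lt g \<in> paths Q"
    using q(1) gk Tip_in_supp[OF admissible gk GSB_nonzero[OF g]] by (auto simp: kQ_def)
  ultimately have "lt t p"
    using admissible_mult_right[OF admissible, of "pmult u q" "pmult u (Tip lt g)" v]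
      admissible_mult_left[OF admissible, of q "Tip lt g" u] u v p q \<open>t \<in> paths Q\<close>
    by (simp add: pmult_in_paths[OF finite_Q] pend_pmult)
  moreover have "reduces1 Q lt I W p t"
    using u v p q t \<open>q \<in> paths Q\<close> \<open>t \<in> paths Q\<close> \<open>q \<noteq> Tip lt g\<close> GSB_in_ideal[OF g] GSB_nonzero[OF g] g
    by (intro reduces1I[where u=u and v=v and f=g and p=q]) auto
  ultimately show "reduces1 Q lt I W p t \<and> lt t p" by blast
qed

lemma TipI_path_decomp:
  assumes "p \<in> paths Q" "p \<notin> NonTip Q lt I"
  obtains g u v where "g \<in> G" "u \<in> paths Q" "pend Q u = fst (Tip lt g)"
    "v \<in> paths Q" "pend Q (Tip lt g) = fst v" "p = pmult (pmult u (Tip lt g)) v"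
proof -
  obtain g where "g \<in> G" "is_factor Q (Tip lt g) p"
    using TipI_has_GSB_factor assms unfolding NonTip_def by blast
  then show ?thesis
    using that by (auto simp: is_factor_def)
qed

lemma normal_form_of_path:
  "p \<in> paths Q \<Longrightarrow>
    \<exists>y. is_normal_form Q lt I (pelem p) y \<and> supp y \<subseteq> {q. q = p \<or> converges Q lt I W p q}"
proof (induction p rule: wf_induct_rule[OF admissible_wf[OF admissible]])
  \<comment> \<open>If p = u Tip(g) v, subtracting u g v leaves one-step reducts of p, all smaller than p.\<close>
  case (1 p)
  let ?S = "{q. q = p \<or> converges Q lt I W p q}"
  show ?case
  proof (cases "p \<in> NonTip Q lt I")
    case True
    then have "is_normal_form Q lt I (pelem p) (pelem p)"
      using ideal_zero[OF ideal] pelem_kQ[OF "1.prems"] by (simp add: is_normal_form_def)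
    then show ?thesis by auto
  next
    case False
    then obtain g u v where g: "g \<in> G" and u: "u \<in> paths Q" "pend Q u = fst (Tip lt g)"
      and v: "v \<in> paths Q" "pend Q (Tip lt g) = fst v" and p: "p = pmult (pmult u (Tip lt g)) v"
      using TipI_path_decomp "1.prems" by metis
    define r where "r = kmult Q (kmult Q (pelem u) g) (pelem v)"
    define z where "z = (\<lambda>x. pelem p x - r x)"
    have rI: "r \<in> I"
      using tip_multiple_in_ideal g u v p "1.prems" unfolding r_def by blast
    have "\<forall>t\<in>supp z. \<exists>y. is_normal_form Q lt I (pelem t) y \<and> supp y \<subseteq> ?S"
    proof
      fix t assume "t \<in> supp z"
      then have red: "reduces1 Q lt I W p t" and "lt t p"
        using tip_multiple_reduces g u v p "1.prems" unfolding r_def z_def by blast+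
      moreover have "t \<in> paths Q"
        using reduces1_ends(2)[OF red] .
      ultimately obtain y where "is_normal_form Q lt I (pelem t) y"
        and "supp y \<subseteq> {q. q = t \<or> converges Q lt I W t q}"
        using "1.IH" "1.prems" by blast
      moreover have "converges Q lt I W t q \<Longrightarrow> converges Q lt I W p q" for q
        using red unfolding converges_def by (rule tranclp_into_tranclp2)
      ultimately show "\<exists>y. is_normal_form Q lt I (pelem t) y \<and> supp y \<subseteq> ?S"
        using red unfolding converges_def by blast
    qed
    moreover have "z \<in> kQ Q"
      unfolding z_def using kQ_diff pelem_kQ[OF "1.prems"] ideal_kQ[OF ideal rI] by blast
    moreover have "finite (supp z)" if "z \<in> kQ Q"
      using that by (simp add: kQ_def)
    ultimately obtain y where y: "is_normal_form Q lt I z y" "supp y \<subseteq> ?S"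
      using normal_form_from_paths[OF ideal _ _ subset_refl] by blast
    have "(\<lambda>x. pelem p x - y x) = (\<lambda>x. r x + (z x - y x))"
      by (simp add: z_def)
    then have "is_normal_form Q lt I (pelem p) y"
      using y(1) ideal_add[OF ideal rI] by (simp add: is_normal_form_def)
    with y(2) show ?thesis by blast
  qed
qed

lemma NF_normal_form:
  assumes "z \<in> kQ Q"
  shows "is_normal_form Q lt I z (NF Q lt I z)"
proof -
  have "\<forall>t\<in>supp z. \<exists>y. is_normal_form Q lt I (pelem t) y \<and> supp y \<subseteq> UNIV"
    using normal_form_of_path assms unfolding kQ_def by blast
  moreover have "finite (supp z)"
    using assms by (simp add: kQ_def)
  ultimately obtain y where "is_normal_form Q lt I z y"
    using normal_form_from_paths[OF ideal _ assms subset_refl] by blast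
  then show ?thesis
    using NF_eqI[OF admissible ideal] by simp
qed

lemma supp_NF_pelem:
  "p \<in> paths Q \<Longrightarrow> supp (NF Q lt I (pelem p)) \<subseteq> {q. q = p \<or> converges Q lt I W p q}"
  using normal_form_of_path NF_eqI[OF admissible ideal] by blast

lemma amult_kQ: "\<lbrakk>a \<in> kQ Q; b \<in> kQ Q\<rbrakk> \<Longrightarrow> amult Q lt I a b \<in> kQ Q"
  using NF_normal_form[OF kmult_kQ] by (simp add: amult_def is_normal_form_def)


lemma path_weight_kQ:
  "\<forall>x\<in>set es. fst x \<longrightarrow> snd x \<in> barrows Q lt I \<Longrightarrow>
    fst (path_weight Q lt I es) \<in> kQ Q \<and> snd (path_weight Q lt I es) \<in> kQ Q"
proof (induction es)
  case (Cons x es)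
  then show ?case
    using medge_weight_kQ[OF finite_Q, of x lt I] by (simp add: path_weight_def split_beta amult_kQ)
qed (simp add: path_weight_def aone_kQ[OF finite_Q])


lemma middle_arrow_seq_prod:
  assumes "(s, i, t) \<in> barrows Q lt I" "\<not> outer_arrow (s, i, t)"
  shows "(reduces1 Q lt I W)\<^sup>*\<^sup>* (seq_prod s) (seq_prod t)"
proof -
  obtain e L1 a b L2 u where s: "s = (e, L1 @ [a, b] @ L2)" and t: "t = (e, L1 @ [u] @ L2)"
    and u: "u \<in> supp (NF Q lt I (pelem (pmult a b)))"
    using middle_arrow_decomp[OF assms] by metis
  define A where "A = concat (map snd L1)"
  define B where "B = concat (map snd L2)"
  have "s \<in> bverts Q lt I"
    using assms(1) by (simp add: barrows_def)
  then have "seq_comp Q (pend Q (e, A)) ([a, b] @ L2)"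
    using seq_comp_append[of Q e L1] by (simp add: s bverts_def seq_prod_def A_def)
  then have ends: "fst a = pend Q (e, A)" "fst b = pend Q a"
    by simp_all
  have "seq_prod s = (e, A @ snd a @ snd b @ B)"
    by (simp add: s seq_prod_def A_def B_def)
  then have "(e, A @ snd a @ snd b @ B) \<in> paths Q"
    using seq_prod_in_paths[OF finite_Q] \<open>s \<in> bverts Q lt I\<close> s by metis
  then have paths: "(e, A) \<in> paths Q" "pmult a b \<in> paths Q" "(pend Q (pmult a b), B) \<in> paths Q"
    using ends paths_append[OF finite_Q] by (auto simp: pmult_def pend_append)
  have prods: "seq_prod s = pmult (pmult (e, A) (pmult a b)) (pend Q (pmult a b), B)"
      "seq_prod t = pmult (pmult (e, A) u) (pend Q (pmult a b), B)"
    using \<open>seq_prod s = _\<close> by (simp_all add: t seq_prod_def A_def B_def pmult_def)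
  have "u = pmult a b \<or> converges Q lt I W (pmult a b) u"
    using supp_NF_pelem[OF paths(2)] u by auto
  then show ?thesis
  proof
    assume "converges Q lt I W (pmult a b) u"
    then have "converges Q lt I W (seq_prod s) (seq_prod t)"
      unfolding prods using paths ends by (intro converges_pmult[OF finite_Q]) simp_all
    then show ?thesis
      by (simp add: converges_def tranclp_into_rtranclp)
  qed (simp add: prods)
qed

lemma zigzag_edge_seq_prod:
  assumes es: "es \<in> zigzag_paths Q lt I W c c'" and x: "x \<in> set es"
    and inner: "fst x \<Longrightarrow> \<not> outer_arrow (snd x)"
  shows "(reduces1 Q lt I W)\<^sup>*\<^sup>* (seq_prod (medge_src x)) (seq_prod (medge_tgt x))"
proof -
  obtain thick s i t where x_def: "x = (thick, s, i, t)"
    by (metis prod.collapse)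
  show ?thesis
  proof (cases thick)
    case True
    then have "(s, i, t) \<in> barrows Q lt I" "\<not> outer_arrow (s, i, t)"
      using zigzag_edge_kinds(1)[OF es x] inner by (simp_all add: x_def)
    then show ?thesis
      using middle_arrow_seq_prod True by (simp add: x_def medge_src_def medge_tgt_def)
  next
    case False
    then have "(s, i, t) \<in> matching Q lt I W"
      using zigzag_edge_kinds(2)[OF es x] by (simp add: x_def)
    then have "seq_prod s = seq_prod t"
      by (rule matching_seq_prod)
    then show ?thesis
      using False by (simp add: x_def medge_src_def medge_tgt_def)
  qed
qed

lemma zigzag_seq_prod_rtranclp:
  assumes es: "es \<in> zigzag_paths Q lt I W c c'"
    and inner: "\<forall>x\<in>set es. fst x \<longrightarrow> \<not> outer_arrow (snd x)"
  shows "(reduces1 Q lt I W)\<^sup>*\<^sup>* (seq_prod c) (seq_prod c')"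
proof -
  have "es \<noteq> []" "successively (\<lambda>x y. medge_tgt x = medge_src y) es"
    using es by (auto simp: zigzag_paths_def successively_conv_nth)
  then have linked: "successively (\<lambda>x y. seq_prod (medge_tgt x) = seq_prod (medge_src y)) es"
    by (auto elim: successively_mono)
  have "\<forall>x\<in>set es. (reduces1 Q lt I W)\<^sup>*\<^sup>* (seq_prod (medge_src x)) (seq_prod (medge_tgt x))"
    using zigzag_edge_seq_prod[OF es] inner by blast
  then have "(reduces1 Q lt I W)\<^sup>*\<^sup>* (seq_prod (medge_src (hd es))) (seq_prod (medge_tgt (last es)))"
    by (rule rtranclp_along_successively[OF linked \<open>es \<noteq> []\<close>])
  then show ?thesis
    using es by (simp add: zigzag_paths_def)
qed

end

locale reduced_gsb_len2 = reduced_gsb +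
  assumes len2: "ideal_in_len2 I"
begin

lemma NF_short_path:
  assumes "z \<in> kQ Q" "plen x < 2"
  shows "NF Q lt I z x = z x"
proof -
  have "(\<lambda>p. z p - NF Q lt I z p) \<in> I"
    using NF_normal_form[OF assms(1)] by (simp add: is_normal_form_def)
  then have "\<forall>p\<in>supp (\<lambda>p. z p - NF Q lt I z p). 2 \<le> plen p"
    using len2 unfolding ideal_in_len2_def by blast
  then have "x \<notin> supp (\<lambda>p. z p - NF Q lt I z p)"
    using assms(2) leD by blast
  then show ?thesis
    by (simp add: supp_def)
qed

lemma amult_vpath:
  "\<lbrakk>a \<in> kQ Q; b \<in> kQ Q\<rbrakk> \<Longrightarrow>
    amult Q lt I a b (vpath e) = (if e \<in> verts Q then a (vpath e) * b (vpath e) else 0)"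
  using NF_short_path[OF kmult_kQ, of a b "vpath e"] by (simp add: amult_def kmult_vpath)

lemma path_weight_vpath:
  assumes "\<forall>x\<in>set es. fst x \<longrightarrow> snd x \<in> barrows Q lt I"
  shows "fst (path_weight Q lt I es) (vpath e) =
      aone Q (vpath e) * (\<Prod>x\<leftarrow>es. fst (medge_weight Q lt I x) (vpath e)) \<and>
    snd (path_weight Q lt I es) (vpath e) =
      aone Q (vpath e) * (\<Prod>x\<leftarrow>es. snd (medge_weight Q lt I x) (vpath e))"
  using assms
proof (induction es)
  case (Cons x es)
  then show ?case
    using medge_weight_kQ[OF finite_Q, of x lt I] path_weight_kQ[of es]
    by (simp add: path_weight_def split_beta amult_vpath aone_vpath)
qed (simp add: path_weight_def)


lemma outer_arrow_term_vanishes: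
  assumes es: "es \<in> zigzag_paths Q lt I W c c'" and x: "x \<in> set es" "fst x" "outer_arrow (snd x)"
  shows "fst (path_weight Q lt I es) (vpath e) * snd (path_weight Q lt I es) (vpath e') = 0"
proof -
  obtain s i t where x_def: "x = (True, s, i, t)"
    using x(2) by (metis prod.collapse)
  then have "(s, i, t) \<in> barrows Q lt I"
    using zigzag_edge_kinds(1)[OF es x(1)] by simp
  then have "snd s \<noteq> []" and pos: "\<forall>w\<in>set (snd s). 0 < plen w"
    by (auto simp: barrows_def bverts_def)
  then have "hd (snd s) \<noteq> vpath e" "last (snd s) \<noteq> vpath e'"
    by (metis hd_in_set last_in_set less_irrefl plen_vpath)+
  then have "fst (medge_weight Q lt I x) (vpath e) = 0 \<or> snd (medge_weight Q lt I x) (vpath e') = 0"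
    using x(3) \<open>snd s \<noteq> []\<close>
    by (auto simp: x_def outer_arrow_def medge_weight_def bweight_def pelem_def)
  moreover have "\<forall>x\<in>set es. fst x \<longrightarrow> snd x \<in> barrows Q lt I"
    using zigzag_edge_kinds(1)[OF es] by blast
  ultimately show ?thesis
    using path_weight_vpath x(1) by (auto simp: prod_list_zero_iff)
qed

lemma zigzag_term_vanishes:
  assumes "1 \<le> n" and c: "c \<in> anick_gens Q lt I W n" and c': "c' \<in> anick_gens Q lt I W (n - 1)"
    and no_conv: "\<not> converges Q lt I W (seq_prod c) (seq_prod c')"
    and es: "es \<in> zigzag_paths Q lt I W c c'"
  shows "fst (path_weight Q lt I es) (vpath e) * snd (path_weight Q lt I es) (vpath e') = 0"
proof (cases "\<exists>x\<in>set es. fst x \<and> outer_arrow (snd x)")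
  case True
  then show ?thesis
    using outer_arrow_term_vanishes[OF es] by blast
next
  case False
  then have "(reduces1 Q lt I W)\<^sup>*\<^sup>* (seq_prod c) (seq_prod c')"
    using zigzag_seq_prod_rtranclp[OF es] by blast
  then have "seq_prod c = seq_prod c'"
    using no_conv by (auto simp: converges_def dest: rtranclpD)
  then show ?thesis
    using anick_gens_seq_prod_neq[OF finite_Q \<open>1 \<le> n\<close> c c'] by blast
qed

end

theorem theorem5p4:
  fixes Q :: "('v, 'a) quiver"
    and lt :: "('v, 'a) path \<Rightarrow> ('v, 'a) path \<Rightarrow> bool"
    and I :: "(('v, 'a) path \<Rightarrow> 'k::field) set"
    and G :: "(('v, 'a) path \<Rightarrow> 'k) set"
  assumes "finite_quiver Q"
    and "admissible_order Q lt"
    and "two_sided_ideal Q I"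
    and "ideal_in_len2 I"
    and "reduced_GSB Q lt I G"
    and "\<forall>n\<ge>1. \<forall>c\<in>anick_gens Q lt I (Tip lt ` G) n.
           \<forall>c'\<in>anick_gens Q lt I (Tip lt ` G) (n - 1).
             \<not> converges Q lt I (Tip lt ` G) (seq_prod c) (seq_prod c')"
  shows "anick_minimal Q lt I (Tip lt ` G)"
proof -
  interpret reduced_gsb_len2 Q lt I G
    using assms(1-5) by unfold_locales
  show ?thesis
    unfolding anick_minimal_def
    using zigzag_term_vanishes assms(6) by (auto intro!: sum.neutral)
qed

end
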